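(* Let $f:\mathbb{N}\to\mathbb{R}$ with $f(1)=1$. Assume there exist $C>0$ and $\gamma\in\mathbb{R}$ such that $|f(n)|\leq Cn^\gamma$ for all $n\geq2$. Then $$|f^{-1}(n)|\leq n^{\gamma+\varsigma}, \quad n\geq2,$$ where $\varsigma>1$ is the unique real root of $\zeta(s)=\frac{1}{C}+1$.
   Context: $f^{-1}$ denotes the Dirichlet inverse of $f$: the arithmetic function with $\sum_{d\mid n} f(n/d) f^{-1}(d)=\varepsilon(n)$ for all $n$, where $\varepsilon(1)=1$ and $\varepsilon(n)=0$ for $n\ge2$. $\zeta$ is the Riemann zeta function. *)

theory Defs
  imports "HOL-Analysis.Analysis"
begin

text \<open>Arithmetic functions are functions nat => real; the value at 0 is irrelevant.
  g is a Dirichlet inverse of f iff sum over d dividing n of f(n/d) g(d) = epsilon(n) for all n >= 1.\<close>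
definition dirichlet_inverse_of :: "(nat \<Rightarrow> real) \<Rightarrow> (nat \<Rightarrow> real) \<Rightarrow> bool" where
  "dirichlet_inverse_of f g \<longleftrightarrow>
     (\<forall>n\<ge>1. (\<Sum>d | d dvd n. f (n div d) * g d) = (if n = 1 then 1 else 0))"

definition real_zeta :: "real \<Rightarrow> real" where
  "real_zeta s = (\<Sum>n. 1 / real (Suc n) powr s)"

end

theory Submission
  imports Defs
begin

text \<open>Writing n = d e, the defining recursion of the Dirichlet inverse expresses g n through the
  values g d at the proper divisors d of n, weighted by f e with e > 1. If inductively
  |g d| \<le> d powr (\<gamma> + \<sigma>), then |f e| |g d| \<le> C n powr (\<gamma> + \<sigma>) e powr -\<sigma>, and summing over
  the divisors e > 1 of n gives |g n| \<le> C (\<zeta>(\<sigma>) - 1) n powr (\<gamma> + \<sigma>). The choice of \<sigma>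
  makes C (\<zeta>(\<sigma>) - 1) = 1.\<close>

lemma summable_inverse_Suc_powr:
  assumes "s > 1"
  shows "summable (\<lambda>n. 1 / real (Suc n) powr s)"
proof -
  have "summable (\<lambda>n. real n powr (-s))"
    using assms by (subst summable_real_powr_iff) auto
  then have "summable (\<lambda>n. real (Suc n) powr (-s))"
    by (subst summable_Suc_iff)
  then show ?thesis by (simp add: powr_minus_divide)
qed

lemma sum_inverse_powr_le_real_zeta_minus_one:
  assumes "s > 1" "finite A" "A \<subseteq> {2..}"
  shows "(\<Sum>e\<in>A. 1 / real e powr s) \<le> real_zeta s - 1"
proof -
  define B where "B = Suc -` insert 1 A"
  have "finite B"
    unfolding B_def using assms(2) by (intro finite_vimageI) auto
  have "Suc ` B = insert 1 A"
    unfolding B_def image_vimage_eq greaterThan_0[symmetric] using assms(3) by auto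
  have "1 \<notin> A"
    using assms(3) by auto
  then have "1 + (\<Sum>e\<in>A. 1 / real e powr s) = (\<Sum>e\<in>insert 1 A. 1 / real e powr s)"
    using assms(2) by simp
  also have "\<dots> = (\<Sum>k\<in>B. 1 / real (Suc k) powr s)"
    unfolding \<open>Suc ` B = insert 1 A\<close>[symmetric] by (simp add: sum.reindex)
  also have "\<dots> \<le> real_zeta s"
    unfolding real_zeta_def
    by (rule sum_le_suminf[OF summable_inverse_Suc_powr[OF assms(1)] \<open>finite B\<close>]) simp
  finally show ?thesis by linarith
qed

lemma sum_proper_divisors_div:
  fixes n :: nat and h :: "nat \<Rightarrow> 'a::comm_monoid_add"
  assumes "n > 0"
  shows "(\<Sum>d | d dvd n \<and> d < n. h (n div d)) = (\<Sum>e | e dvd n \<and> 1 < e. h e)"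
proof (rule sum.reindex_bij_witness[where i = "\<lambda>e. n div e" and j = "\<lambda>d. n div d"])
  fix d assume "d \<in> {d. d dvd n \<and> d < n}"
  then obtain e where "n = d * e" "d < n" by (auto elim: dvdE)
  with assms show "n div (n div d) = d" "n div d \<in> {e. e dvd n \<and> 1 < e}" "h (n div d) = h (n div d)"
    by auto
next
  fix e assume "e \<in> {e. e dvd n \<and> 1 < e}"
  then obtain d where "n = e * d" "1 < e" by (auto elim: dvdE)
  with assms show "n div (n div e) = e" "n div e \<in> {d. d dvd n \<and> d < n}"
    by auto
qed

lemma dirichlet_inverse_ofD:
  assumes "dirichlet_inverse_of f g" "n \<ge> 1"
  shows "(\<Sum>d | d dvd n. f (n div d) * g d) = (if n = 1 then 1 else 0)"
  using assms unfolding dirichlet_inverse_of_def by blast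

lemma dirichlet_inverse_one:
  assumes "dirichlet_inverse_of f g" "f 1 = 1"
  shows "g 1 = 1"
  using dirichlet_inverse_ofD[OF assms(1), of 1] assms(2) by simp

lemma dirichlet_inverse_recursion:
  assumes "dirichlet_inverse_of f g" "f 1 = 1" "n \<ge> 2"
  shows "g n = - (\<Sum>d | d dvd n \<and> d < n. f (n div d) * g d)"
proof -
  have "{d. d dvd n} = insert n {d. d dvd n \<and> d < n}"
    using assms(3) by (auto dest: dvd_imp_le)
  then have "(\<Sum>d | d dvd n. f (n div d) * g d) = f 1 * g n + (\<Sum>d | d dvd n \<and> d < n. f (n div d) * g d)"
    using assms(3) by simp
  with dirichlet_inverse_ofD[OF assms(1), of n] assms(2,3) show ?thesis
    by simp
qed

lemma abs_dirichlet_inverse_le_powr: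
  fixes f g :: "nat \<Rightarrow> real"
  assumes inv: "dirichlet_inverse_of f g" and f1: "f 1 = 1"
    and C: "C \<ge> 0" and bound: "\<And>n. n \<ge> 2 \<Longrightarrow> \<bar>f n\<bar> \<le> C * real n powr \<gamma>"
    and \<sigma>: "\<sigma> > 1" and zeta: "C * (real_zeta \<sigma> - 1) \<le> 1"
    and n: "n \<ge> 1"
  shows "\<bar>g n\<bar> \<le> real n powr (\<gamma> + \<sigma>)"
  using n
proof (induction n rule: less_induct)
  case (less n)
  show ?case
  proof (cases "n = 1")
    case True
    then show ?thesis using dirichlet_inverse_one[OF inv f1] by simp
  next
    case False
    with less.prems have n2: "n \<ge> 2" by simp
    let ?N = "real n powr (\<gamma> + \<sigma>)"
    have term_bound: "\<bar>f (n div d) * g d\<bar> \<le> C * ?N * (1 / real (n div d) powr \<sigma>)"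
      if "d \<in> {d. d dvd n \<and> d < n}" for d
    proof -
      from that obtain e where ne: "n = d * e" and dn: "d < n" by (auto elim: dvdE)
      with n2 have d1: "d \<ge> 1" and e2: "e \<ge> 2" and ediv: "n div d = e"
        by (auto simp: not_less_eq_eq)
      have "\<bar>f (n div d) * g d\<bar> = \<bar>f e\<bar> * \<bar>g d\<bar>" by (simp add: abs_mult ediv)
      also have "\<dots> \<le> (C * real e powr \<gamma>) * real d powr (\<gamma> + \<sigma>)"
        using bound[OF e2] less.IH[OF dn d1] by (intro mult_mono) auto
      also have "\<dots> = C * ?N * (1 / real e powr \<sigma>)"
        using d1 e2 by (simp add: ne powr_mult powr_add field_simps)
      finally show ?thesis by (simp add: ediv)
    qed
    have "\<bar>g n\<bar> \<le> (\<Sum>d | d dvd n \<and> d < n. \<bar>f (n div d) * g d\<bar>)"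
      unfolding dirichlet_inverse_recursion[OF inv f1 n2] by (simp add: sum_abs)
    also have "\<dots> \<le> (\<Sum>d | d dvd n \<and> d < n. C * ?N * (1 / real (n div d) powr \<sigma>))"
      by (rule sum_mono) (rule term_bound)
    also have "\<dots> = C * ?N * (\<Sum>d | d dvd n \<and> d < n. 1 / real (n div d) powr \<sigma>)"
      by (simp add: sum_distrib_left)
    also have "\<dots> = C * ?N * (\<Sum>e | e dvd n \<and> 1 < e. 1 / real e powr \<sigma>)"
      using n2 sum_proper_divisors_div[of n "\<lambda>e. 1 / real e powr \<sigma>"] by simp
    also have "\<dots> \<le> C * ?N * (real_zeta \<sigma> - 1)"
      using n2 C by (intro mult_left_mono sum_inverse_powr_le_real_zeta_minus_one \<sigma>) auto
    also have "\<dots> = C * (real_zeta \<sigma> - 1) * ?N"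
      by (simp add: ac_simps)
    also have "\<dots> \<le> ?N"
      using mult_right_mono[OF zeta powr_ge_zero] by simp
    finally show ?thesis .
  qed
qed

theorem proposition3p10:
  fixes f g :: "nat \<Rightarrow> real" and C \<gamma> \<sigma> :: real
  assumes f1: "f 1 = 1"
    and inv: "dirichlet_inverse_of f g"
    and Cpos: "C > 0"
    and bound: "\<And>n. n \<ge> 2 \<Longrightarrow> \<bar>f n\<bar> \<le> C * real n powr \<gamma>"
    and sigma_gt: "\<sigma> > 1"
    and sigma_root: "real_zeta \<sigma> = 1 / C + 1"
  shows "\<forall>n\<ge>2. \<bar>g n\<bar> \<le> real n powr (\<gamma> + \<sigma>)"
proof (intro allI impI)
  fix n :: nat
  assume "n \<ge> 2"
  have "C * (real_zeta \<sigma> - 1) = 1"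
    using sigma_root Cpos by simp
  with Cpos \<open>n \<ge> 2\<close> show "\<bar>g n\<bar> \<le> real n powr (\<gamma> + \<sigma>)"
    by (intro abs_dirichlet_inverse_le_powr[OF inv f1 _ bound sigma_gt]) auto
qed

end
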